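(* Let $T=(V,E)$ be a tree shape and $k$ a positive integer such that for every choice of root $u_0\in V$ there is a root-to-leaf path in $T$ containing at least $k$ turning points. Then any growth process for $T$ starting from a single node in the connectivity graph model requires at least $k-1$ time steps.
   Context: Shapes. Grid points are integer pairs $(x,y)$; two grid points are adjacent if they are at orthogonal (Manhattan) distance $1$. A shape $S=(V,E)$ is a finite connected graph whose nodes occupy distinct grid points and whose edges join only pairs of nodes occupying adjacent points; shapes are considered up to translation. Growth operations. One node, the anchor $u_0$, is stationary; other nodes move relative to it, and a tree is rooted at $u_0$. A growth operation on a node $u$ toward an adjacent grid point $p$ either (i) if $u$ has no edge to $p$, creates a new node $u'$ at $p$ with edge $uu'$; or (ii) if $p$ is occupied by a node $v$ with $uv\in E$, creates a new node $u'$ at $p$, replaces edge $uv$ by edges $uu',u'v$, and translates by one unit, along the axis of $uv$, the part of the tree hanging from whichever of $u,v$ is farther from $u_0$, away from the other endpoint. In one time step a set of operations is applied concurrently, each node receiving at most one operation and all operations having the same cardinal direction; the displacement of each node is the sum of the unit vectors contributed by the operations on its path to $u_0$. The set is collision-free if no two nodes collide during these motions or end at the same point. Growth processes (connectivity graph model). A growth process from an initial shape $S_0$ performs time steps $t=1,2,\dots$, each applying a collision-free set of growth operations to the current shape; no edges are deleted and no edges are created other than by the operations. It grows $S$ from $S_0$ in $t_f$ time steps if the shape obtained after step $t_f$ is $S$. A node $w$ of a path is a turning point of the path if it is an endpoint or its two path-neighbors $v_1,v_2$ satisfy $v_1w\perp wv_2$. *)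

theory Defs
  imports Complex_Main
begin

type_synonym pt = "int \<times> int"

text \<open>A shape is given by its set of nodes (distinct grid points) and its edges
  (unordered pairs of nodes). Shapes are compared up to translation.\<close>
type_synonym shape = "pt set \<times> pt set set"

definition padd :: "pt \<Rightarrow> pt \<Rightarrow> pt" where
  "padd p q = (fst p + fst q, snd p + snd q)"

definition psmul :: "int \<Rightarrow> pt \<Rightarrow> pt" where
  "psmul c p = (c * fst p, c * snd p)"

definition grid_adj :: "pt \<Rightarrow> pt \<Rightarrow> bool" where
  "grid_adj p q \<longleftrightarrow> \<bar>fst p - fst q\<bar> + \<bar>snd p - snd q\<bar> = 1"

definition reach :: "pt set set \<Rightarrow> pt \<Rightarrow> pt \<Rightarrow> bool" where
  "reach E = (\<lambda>a b. {a, b} \<in> E)\<^sup>*\<^sup>*"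

definition is_shape :: "shape \<Rightarrow> bool" where
  "is_shape S \<longleftrightarrow> finite (fst S) \<and> fst S \<noteq> {} \<and>
     (\<forall>e\<in>snd S. \<exists>a b. e = {a, b} \<and> a \<in> fst S \<and> b \<in> fst S \<and> grid_adj a b) \<and>
     (\<forall>a\<in>fst S. \<forall>b\<in>fst S. reach (snd S) a b)"

definition translate :: "pt \<Rightarrow> shape \<Rightarrow> shape" where
  "translate v S = ((\<lambda>x. padd x v) ` fst S, (\<lambda>e. (\<lambda>x. padd x v) ` e) ` snd S)"

definition is_path :: "shape \<Rightarrow> pt list \<Rightarrow> bool" where
  "is_path S xs \<longleftrightarrow> xs \<noteq> [] \<and> set xs \<subseteq> fst S \<and> distinct xs \<and>
     (\<forall>i. Suc i < length xs \<longrightarrow> {xs ! i, xs ! Suc i} \<in> snd S)"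

definition has_cycle :: "shape \<Rightarrow> bool" where
  "has_cycle S \<longleftrightarrow> (\<exists>xs. is_path S xs \<and> 3 \<le> length xs \<and> {last xs, hd xs} \<in> snd S)"

definition is_tree_shape :: "shape \<Rightarrow> bool" where
  "is_tree_shape S \<longleftrightarrow> is_shape S \<and> \<not> has_cycle S"

text \<open>Root-to-leaf path for root u0: a path starting at u0 whose last node has
  no child (all its neighbours already lie on the path).\<close>
definition root_leaf_path :: "shape \<Rightarrow> pt \<Rightarrow> pt list \<Rightarrow> bool" where
  "root_leaf_path S u0 xs \<longleftrightarrow> is_path S xs \<and> hd xs = u0 \<and>
     (\<forall>y. {last xs, y} \<in> snd S \<longrightarrow> y \<in> set xs)"

text \<open>Indices of the turning points of a path (endpoints, or nodes whose two
  path-edges are perpendicular). Paths are distinct, so indices correspond to nodes.\<close>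
definition turning_points :: "pt list \<Rightarrow> nat set" where
  "turning_points xs = {i. i < length xs \<and> (i = 0 \<or> i = length xs - 1 \<or>
     (let v1 = xs ! (i - 1); w = xs ! i; v2 = xs ! (i + 1) in
       (fst w - fst v1) * (fst v2 - fst w) + (snd w - snd v1) * (snd v2 - snd w) = 0))}"

definition dirs :: "pt set" where
  "dirs = {(1, 0), (-1, 0), (0, 1), (0, -1)}"

definition separated :: "pt set set \<Rightarrow> pt set \<Rightarrow> pt \<Rightarrow> pt \<Rightarrow> bool" where
  "separated E e r x \<longleftrightarrow> \<not> reach (E - {e}) r x"

text \<open>Displacement of an old node x (as a multiple of the common direction d):
  sum of the contributions of the edge-subdividing operations on its path to r;
  an operation on u toward v = u + d moves the side of the farther endpoint away
  from the other endpoint, i.e. by +d if v is farther and by -d if u is farther.\<close>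
definition shift :: "pt set set \<Rightarrow> pt \<Rightarrow> pt \<Rightarrow> pt set \<Rightarrow> pt \<Rightarrow> int" where
  "shift E r d U x = (\<Sum>u \<in> {u \<in> U. {u, padd u d} \<in> E \<and> separated E {u, padd u d} r x}.
       (if separated E {u, padd u d} r (padd u d) then 1 else -1))"

text \<open>Operation on u subdivides edge {u, u+d} and u is the farther endpoint.\<close>
definition back_op :: "pt set set \<Rightarrow> pt \<Rightarrow> pt \<Rightarrow> pt \<Rightarrow> bool" where
  "back_op E r d u \<longleftrightarrow> {u, padd u d} \<in> E \<and> \<not> separated E {u, padd u d} r (padd u d)"

text \<open>The new node created by the operation on u is attached one unit from its
  parent endpoint q (the endpoint nearer to r), in direction e.\<close>
definition new_par :: "pt set set \<Rightarrow> pt \<Rightarrow> pt \<Rightarrow> pt \<Rightarrow> pt" where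
  "new_par E r d u = (if back_op E r d u then padd u d else u)"

definition new_dir :: "pt set set \<Rightarrow> pt \<Rightarrow> pt \<Rightarrow> pt \<Rightarrow> pt" where
  "new_dir E r d u = (if back_op E r d u then psmul (-1) d else d)"

definition fin_old :: "pt set set \<Rightarrow> pt \<Rightarrow> pt \<Rightarrow> pt set \<Rightarrow> pt \<Rightarrow> pt" where
  "fin_old E r d U x = padd x (psmul (shift E r d U x) d)"

definition fin_new :: "pt set set \<Rightarrow> pt \<Rightarrow> pt \<Rightarrow> pt set \<Rightarrow> pt \<Rightarrow> pt" where
  "fin_new E r d U u =
     (let q = new_par E r d u in padd (fin_old E r d U q) (new_dir E r d u))"

text \<open>Continuous (linear in time) motion: old nodes move from their position to
  their final position; a new node emerges from its parent endpoint's position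
  and moves linearly to its final position.\<close>
definition traj :: "pt set set \<Rightarrow> pt \<Rightarrow> pt \<Rightarrow> pt set \<Rightarrow> real \<Rightarrow> pt + pt \<Rightarrow> real \<times> real" where
  "traj E r d U t z = (case z of
       Inl x \<Rightarrow> (let f = fin_old E r d U x in
                  (of_int (fst x) + t * of_int (fst f - fst x),
                   of_int (snd x) + t * of_int (snd f - snd x)))
     | Inr u \<Rightarrow> (let q = new_par E r d u; f = fin_new E r d U u in
                  (of_int (fst q) + t * of_int (fst f - fst q),
                   of_int (snd q) + t * of_int (snd f - snd q))))"

text \<open>Collision-free: at no time in (0,1] do two distinct nodes occupy the same
  point (time 1 = final configuration).\<close>
definition collision_free :: "shape \<Rightarrow> pt \<Rightarrow> pt \<Rightarrow> pt set \<Rightarrow> bool" where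
  "collision_free S r d U \<longleftrightarrow>
     (\<forall>t::real. 0 < t \<and> t \<le> 1 \<longrightarrow> inj_on (traj (snd S) r d U t) (Inl ` fst S \<union> Inr ` U))"

definition apply_ops :: "shape \<Rightarrow> pt \<Rightarrow> pt \<Rightarrow> pt set \<Rightarrow> shape" where
  "apply_ops S r d U =
     (let E = snd S; F = fin_old E r d U; N = fin_new E r d U in
      (F ` fst S \<union> N ` U,
       {F ` e | e. e \<in> E \<and> \<not> (\<exists>u\<in>U. e = {u, padd u d})}
       \<union> {{F u, N u} | u. u \<in> U}
       \<union> {{N u, F (padd u d)} | u. u \<in> U \<and> {u, padd u d} \<in> E}))"

definition growth_step :: "pt \<Rightarrow> shape \<Rightarrow> shape \<Rightarrow> bool" where
  "growth_step r S S' \<longleftrightarrow> (\<exists>d U. d \<in> dirs \<and> r \<in> fst S \<and> U \<subseteq> fst S \<and>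
      collision_free S r d U \<and> S' = apply_ops S r d U)"

definition grows_in :: "shape \<Rightarrow> nat \<Rightarrow> bool" where
  "grows_in T tf \<longleftrightarrow> (\<exists>a Ss. Ss 0 = ({a}, {}) \<and>
      (\<forall>i<tf. growth_step a (Ss i) (Ss (Suc i))) \<and> (\<exists>v. T = translate v (Ss tf)))"

end

theory Submission
  imports Defs
begin

text \<open>The anchor is fixed and every node moves rigidly together with the part of the tree
  it hangs from, so a growth step preserves the direction of every edge that is not
  subdivided, and the two halves of a subdivided edge keep that edge's direction. Hence a
  path from the anchor after the step contracts to a path from the anchor before the step:
  new nodes in the interior of the path lie on a straight segment and are not turning
  points, and only a new node at the end of the path can create one extra turning point.
  By induction, a path from the anchor after \<open>t\<close> steps has at most \<open>t + 1\<close> turning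
  points; applied to a root-to-leaf path rooted at the anchor this gives \<open>k \<le> t + 1\<close>.\<close>

definition pdiff :: "pt \<Rightarrow> pt \<Rightarrow> pt" where
  "pdiff p q = (fst p - fst q, snd p - snd q)"

definition pdot :: "pt \<Rightarrow> pt \<Rightarrow> int" where
  "pdot p q = fst p * fst q + snd p * snd q"

definition last_edge_vec :: "pt list \<Rightarrow> pt" where
  "last_edge_vec xs = pdiff (last xs) (xs ! (length xs - 2))"

definition parallel :: "pt \<Rightarrow> pt \<Rightarrow> bool" where
  "parallel v w \<longleftrightarrow> (\<exists>c. c \<noteq> 0 \<and> v = psmul c w)"

lemma last_edge_vec_snoc: "ys \<noteq> [] \<Longrightarrow> last_edge_vec (ys @ [z]) = pdiff z (last ys)"
  unfolding last_edge_vec_def by (simp add: nth_append last_conv_nth)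

lemma parallel_refl: "parallel v v"
  unfolding parallel_def by (rule exI[of _ 1]) (simp add: psmul_def)

lemma parallel_pdot_eq_0_iff:
  assumes "parallel v v'" "parallel w w'"
  shows "pdot v w = 0 \<longleftrightarrow> pdot v' w' = 0"
proof -
  obtain c c' where "c \<noteq> 0" "v = psmul c v'" "c' \<noteq> 0" "w = psmul c' w'"
    using assms unfolding parallel_def by blast
  then have "pdot v w = (c * c') * pdot v' w'"
    by (simp add: pdot_def psmul_def algebra_simps)
  then show ?thesis using \<open>c \<noteq> 0\<close> \<open>c' \<noteq> 0\<close> by simp
qed

lemma parallel_psmul_unit:
  "m \<noteq> 0 \<Longrightarrow> s = 1 \<or> s = -1 \<Longrightarrow> parallel (psmul m d) (psmul s d)"
  unfolding parallel_def by (rule exI[of _ "m * s"]) (auto simp: psmul_def)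

lemma pdot_self_dirs: "d \<in> dirs \<Longrightarrow> pdot d d = 1"
  by (auto simp: dirs_def pdot_def)

lemma pdot_psmul_dirs_neq_0:
  assumes "d \<in> dirs" "m1 \<noteq> 0" "m2 \<noteq> 0"
  shows "pdot (psmul m1 d) (psmul m2 d) \<noteq> 0"
proof -
  have "pdot (psmul m1 d) (psmul m2 d) = m1 * m2 * pdot d d"
    by (simp add: pdot_def psmul_def algebra_simps)
  then show ?thesis using assms pdot_self_dirs by simp
qed

lemma pdiff_collinear:
  assumes "pdiff p c = psmul a d" "pdiff q c = psmul b d" "p \<noteq> q"
  shows "\<exists>m. m \<noteq> 0 \<and> pdiff p q = psmul m d"
proof (intro exI conjI)
  show "pdiff p q = psmul (a - b) d" using assms(1,2)
    by (auto simp: pdiff_def psmul_def prod_eq_iff algebra_simps)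
  show "a - b \<noteq> 0"
  proof
    assume "a - b = 0"
    then have "pdiff p c = pdiff q c" using assms by simp
    then show False using assms(3) by (auto simp: pdiff_def prod_eq_iff)
  qed
qed

lemma finite_turning_points: "finite (turning_points ys)"
  unfolding turning_points_def by auto

lemma last_index_in_turning_points: "ys \<noteq> [] \<Longrightarrow> length ys - 1 \<in> turning_points ys"
  unfolding turning_points_def by auto

lemma card_turning_points_le_length: "card (turning_points ys) \<le> length ys"
proof -
  have "turning_points ys \<subseteq> {..<length ys}" unfolding turning_points_def by auto
  then show ?thesis using card_mono[of "{..<length ys}"] by fastforce
qed

lemma turning_points_snoc:
  assumes "ys \<noteq> []"
  shows "turning_points (ys @ [z]) = (turning_points ys - {length ys - 1}) \<union> {length ys} \<union>
     (if length ys = 1 \<or> pdot (last_edge_vec ys) (pdiff z (last ys)) = 0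
      then {length ys - 1} else {})"
proof -
  define n where "n = length ys"
  have n1: "n \<ge> 1" using assms n_def by (cases ys) auto
  have lastn: "last ys = ys ! (n - 1)" using assms n_def by (simp add: last_conv_nth)
  show ?thesis
    unfolding n_def[symmetric]
  proof (intro set_eqI iffI)
    fix i assume "i \<in> turning_points (ys @ [z])"
    then show "i \<in> (turning_points ys - {n - 1}) \<union> {n} \<union>
      (if n = 1 \<or> pdot (last_edge_vec ys) (pdiff z (last ys)) = 0 then {n - 1} else {})"
      unfolding turning_points_def Let_def last_edge_vec_def pdot_def pdiff_def using n1 lastn
      by (cases "i < n - 1"; cases "i = n - 1"; cases "i = n")
         (auto simp: nth_append n_def numeral_2_eq_2 split: if_splits)
  next
    fix i assume "i \<in> (turning_points ys - {n - 1}) \<union> {n} \<union>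
      (if n = 1 \<or> pdot (last_edge_vec ys) (pdiff z (last ys)) = 0 then {n - 1} else {})"
    then show "i \<in> turning_points (ys @ [z])"
      unfolding turning_points_def Let_def last_edge_vec_def pdot_def pdiff_def using n1 lastn
      by (cases "i < n - 1"; cases "i = n - 1"; cases "i = n")
         (auto simp: nth_append n_def numeral_2_eq_2 split: if_splits)
  qed
qed

lemma card_turning_points_snoc:
  assumes "ys \<noteq> []"
  shows "card (turning_points (ys @ [z])) = card (turning_points ys) +
     (if length ys = 1 \<or> pdot (last_edge_vec ys) (pdiff z (last ys)) = 0 then 1 else 0)"
proof -
  have new: "length ys \<notin> turning_points ys" unfolding turning_points_def by auto
  have old: "length ys - 1 \<in> turning_points ys"
    using last_index_in_turning_points assms by auto
  show ?thesis
  proof (cases "length ys = 1 \<or> pdot (last_edge_vec ys) (pdiff z (last ys)) = 0")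
    case True
    then have "turning_points (ys @ [z]) = insert (length ys) (turning_points ys)"
      using turning_points_snoc[OF assms, of z] old by auto
    then show ?thesis using True new finite_turning_points by simp
  next
    case False
    then have "turning_points (ys @ [z]) =
        insert (length ys) (turning_points ys - {length ys - 1})"
      using turning_points_snoc[OF assms, of z] old by auto
    then have "card (turning_points (ys @ [z])) =
        Suc (card (turning_points ys - {length ys - 1}))"
      using new finite_turning_points by simp
    also have "\<dots> = card (turning_points ys)"
      using old finite_turning_points card_Suc_Diff1 by metis
    finally show ?thesis using False by simp
  qed
qed

lemma is_path_snocD:
  assumes "is_path S (ys @ [z])" "ys \<noteq> []"
  shows "is_path S ys" "z \<notin> set ys" "{last ys, z} \<in> snd S" "z \<in> fst S"
proof -
  have edges: "\<forall>i. Suc i < length (ys @ [z]) \<longrightarrow> {(ys @ [z]) ! i, (ys @ [z]) ! Suc i} \<in> snd S"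
    using assms(1) unfolding is_path_def by blast
  show "is_path S ys" unfolding is_path_def
  proof (intro conjI allI impI)
    fix i assume "Suc i < length ys"
    then show "{ys ! i, ys ! Suc i} \<in> snd S"
      using edges[rule_format, of i] by (simp add: nth_append)
  qed (use assms in \<open>auto simp: is_path_def\<close>)
  show "z \<notin> set ys" "z \<in> fst S" using assms(1) by (auto simp: is_path_def)
  have "{(ys @ [z]) ! (length ys - 1), (ys @ [z]) ! Suc (length ys - 1)} \<in> snd S"
    using edges[rule_format, of "length ys - 1"] assms(2) by simp
  then show "{last ys, z} \<in> snd S" using assms(2) by (simp add: nth_append last_conv_nth)
qed

lemma is_path_snocI:
  assumes "is_path S ys" "z \<notin> set ys" "{last ys, z} \<in> snd S" "z \<in> fst S"
  shows "is_path S (ys @ [z])"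
  unfolding is_path_def
proof (intro conjI allI impI)
  have ne: "ys \<noteq> []" using assms(1) by (simp add: is_path_def)
  fix i assume i: "Suc i < length (ys @ [z])"
  show "{(ys @ [z]) ! i, (ys @ [z]) ! Suc i} \<in> snd S"
  proof (cases "Suc i < length ys")
    case True then show ?thesis using assms(1) by (simp add: nth_append is_path_def)
  next
    case False
    then have "i = length ys - 1" using i by simp
    then show ?thesis using assms(3) ne by (simp add: nth_append last_conv_nth)
  qed
qed (use assms in \<open>auto simp: is_path_def\<close>)

text \<open>Intermediate shapes are not required to satisfy \<open>is_shape\<close>; this weaker invariant is
  what the argument needs from them.\<close>
definition proper_edges :: "shape \<Rightarrow> bool" where
  "proper_edges S \<longleftrightarrow> (\<forall>e\<in>snd S. \<exists>a b. e = {a, b} \<and> a \<in> fst S \<and> b \<in> fst S \<and> a \<noteq> b)"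

text \<open>Relates a path \<open>ys\<close> of the shape after a step, whose old nodes were relocated by \<open>F\<close>,
  to a path \<open>xs\<close> from the anchor \<open>r\<close> before the step.\<close>
definition simulated_by :: "shape \<Rightarrow> pt \<Rightarrow> (pt \<Rightarrow> pt) \<Rightarrow> pt list \<Rightarrow> pt list \<Rightarrow> bool" where
  "simulated_by S r F ys xs \<longleftrightarrow> is_path S xs \<and> hd xs = r \<and> F ` set xs \<subseteq> set ys \<and>
     card (turning_points ys) \<le> card (turning_points xs) \<and> last ys = F (last xs) \<and>
     (length xs = 1 \<longleftrightarrow> length ys = 1) \<and>
     (length ys \<noteq> 1 \<longrightarrow> parallel (last_edge_vec ys) (last_edge_vec xs))"

lemma simulated_by_snoc:
  assumes sim: "simulated_by S r F ys xs" and ne: "ys \<noteq> []" and z: "z \<notin> set ys"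
    and y: "y \<in> fst S" and e: "{last xs, y} \<in> snd S" and zF: "z = F y"
    and rigid: "pdiff (F y) (F (last xs)) = pdiff y (last xs)"
  shows "simulated_by S r F (ys @ [z]) (xs @ [y])"
proof -
  have p: "is_path S xs" and xne: "xs \<noteq> []" using sim by (auto simp: simulated_by_def is_path_def)
  have "y \<notin> set xs" using sim z zF by (auto simp: simulated_by_def)
  then have p': "is_path S (xs @ [y])" using is_path_snocI[OF p _ e y] by blast
  have ly: "last ys = F (last xs)" using sim by (simp add: simulated_by_def)
  have len: "length xs = 1 \<longleftrightarrow> length ys = 1" using sim by (simp add: simulated_by_def)
  have lv: "last_edge_vec (ys @ [z]) = last_edge_vec (xs @ [y])"
    using last_edge_vec_snoc[OF ne] last_edge_vec_snoc[OF xne] ly zF rigid by simp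
  have turn: "(length ys = 1 \<or> pdot (last_edge_vec ys) (pdiff z (last ys)) = 0) \<longleftrightarrow>
              (length xs = 1 \<or> pdot (last_edge_vec xs) (pdiff y (last xs)) = 0)"
  proof (cases "length ys = 1")
    case False
    then have "parallel (last_edge_vec ys) (last_edge_vec xs)"
      using sim by (simp add: simulated_by_def)
    moreover have "parallel (pdiff z (last ys)) (pdiff y (last xs))"
      using ly zF rigid parallel_refl by simp
    ultimately show ?thesis using parallel_pdot_eq_0_iff len False by blast
  qed (use len in simp)
  have "card (turning_points (ys @ [z])) \<le> card (turning_points (xs @ [y]))"
    using card_turning_points_snoc[OF ne, of z] card_turning_points_snoc[OF xne, of y] turn sim
    by (simp add: simulated_by_def)
  then show ?thesis
    using sim p' xne ne lv zF parallel_refl by (auto simp: simulated_by_def)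
qed

text \<open>A node \<open>n\<close> inserted on a straight segment of \<open>ys\<close> is not a turning point, so the
  two-node extension is still simulated by a one-node extension of \<open>xs\<close>.\<close>
lemma simulated_by_snoc_straight:
  assumes sim: "simulated_by S r F ys xs" and ne: "ys \<noteq> []" and z: "z \<notin> set (ys @ [n])"
    and w: "w \<in> fst S" and e: "{last xs, w} \<in> snd S" and zF: "z = F w"
    and par1: "parallel (pdiff n (F (last xs))) (pdiff w (last xs))"
    and par2: "parallel (pdiff z n) (pdiff w (last xs))"
    and straight: "pdot (pdiff n (F (last xs))) (pdiff z n) \<noteq> 0"
  shows "simulated_by S r F (ys @ [n] @ [z]) (xs @ [w])"
proof -
  have p: "is_path S xs" and xne: "xs \<noteq> []" using sim by (auto simp: simulated_by_def is_path_def)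
  have "w \<notin> set xs" using sim z zF by (auto simp: simulated_by_def)
  then have p': "is_path S (xs @ [w])" using is_path_snocI[OF p _ e w] by blast
  have ly: "last ys = F (last xs)" using sim by (simp add: simulated_by_def)
  have len: "length xs = 1 \<longleftrightarrow> length ys = 1" using sim by (simp add: simulated_by_def)
  have ne2: "ys @ [n] \<noteq> []" by simp
  have lv2: "last_edge_vec (ys @ [n]) = pdiff n (F (last xs))"
    using last_edge_vec_snoc[OF ne] ly by simp
  have c1: "card (turning_points ((ys @ [n]) @ [z])) = card (turning_points (ys @ [n]))"
    using card_turning_points_snoc[OF ne2, of z] lv2 straight ne by simp
  have turn: "(length ys = 1 \<or> pdot (last_edge_vec ys) (pdiff n (last ys)) = 0) \<longleftrightarrow>
              (length xs = 1 \<or> pdot (last_edge_vec xs) (pdiff w (last xs)) = 0)"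
  proof (cases "length ys = 1")
    case False
    then have "parallel (last_edge_vec ys) (last_edge_vec xs)"
      using sim by (simp add: simulated_by_def)
    then show ?thesis using parallel_pdot_eq_0_iff[OF _ par1] len False ly by auto
  qed (use len in simp)
  have "card (turning_points ((ys @ [n]) @ [z])) \<le> card (turning_points (xs @ [w]))"
    using c1 card_turning_points_snoc[OF ne, of n] card_turning_points_snoc[OF xne, of w] turn sim
    by (simp add: simulated_by_def)
  moreover have "last_edge_vec ((ys @ [n]) @ [z]) = pdiff z n"
    using last_edge_vec_snoc[OF ne2] by simp
  moreover have "last_edge_vec (xs @ [w]) = pdiff w (last xs)"
    using last_edge_vec_snoc[OF xne] by simp
  ultimately show ?thesis using sim p' xne ne par2 zF by (auto simp: simulated_by_def)
qed

lemma reach_snoc_edge: "reach E a x \<Longrightarrow> {x, y} \<in> E \<Longrightarrow> reach E a y"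
  unfolding reach_def by (rule rtranclp.rtrancl_into_rtrancl)

locale growth_ops =
  fixes S :: shape and r d :: pt and U :: "pt set"
  assumes proper: "proper_edges S" and anchor: "r \<in> fst S" and ops: "U \<subseteq> fst S"
    and dir: "d \<in> dirs" and coll_free: "collision_free S r d U"
begin

abbreviation "F \<equiv> fin_old (snd S) r d U"
abbreviation "N \<equiv> fin_new (snd S) r d U"

lemma traj_at_1:
  "traj (snd S) r d U 1 (Inl x) = (of_int (fst (F x)), of_int (snd (F x)))"
  "traj (snd S) r d U 1 (Inr u) = (of_int (fst (N u)), of_int (snd (N u)))"
  by (simp_all add: traj_def Let_def)

lemma inj_on_traj_at_1: "inj_on (traj (snd S) r d U 1) (Inl ` fst S \<union> Inr ` U)"
  using coll_free unfolding collision_free_def by auto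

lemma fin_old_inj: "x \<in> fst S \<Longrightarrow> y \<in> fst S \<Longrightarrow> F x = F y \<Longrightarrow> x = y"
  using inj_onD[OF inj_on_traj_at_1, of "Inl x" "Inl y"] by (simp add: traj_at_1)

lemma fin_new_inj: "u \<in> U \<Longrightarrow> v \<in> U \<Longrightarrow> N u = N v \<Longrightarrow> u = v"
  using inj_onD[OF inj_on_traj_at_1, of "Inr u" "Inr v"] by (simp add: traj_at_1)

lemma fin_old_neq_fin_new: "x \<in> fst S \<Longrightarrow> u \<in> U \<Longrightarrow> F x \<noteq> N u"
  using inj_onD[OF inj_on_traj_at_1, of "Inl x" "Inr u"] by (auto simp: traj_at_1)

lemma fin_old_anchor: "F r = r"
proof -
  have "shift (snd S) r d U r = 0"
    unfolding shift_def separated_def reach_def by simp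
  then show ?thesis by (simp add: fin_old_def padd_def psmul_def)
qed

text \<open>An edge that is not subdivided separates no node from the anchor that it does not
  also separate from the other endpoint, so both endpoints receive the same shift.\<close>
lemma fin_old_rigid_edge:
  assumes "{x, y} \<in> snd S" "\<not> (\<exists>u\<in>U. {x, y} = {u, padd u d})"
  shows "pdiff (F y) (F x) = pdiff y x"
proof -
  let ?E = "snd S"
  have "{u \<in> U. {u, padd u d} \<in> ?E \<and> separated ?E {u, padd u d} r x}
      = {u \<in> U. {u, padd u d} \<in> ?E \<and> separated ?E {u, padd u d} r y}"
  proof (intro Collect_cong conj_cong refl)
    fix u assume "u \<in> U"
    then have "{x, y} \<in> ?E - {{u, padd u d}}" "{y, x} \<in> ?E - {{u, padd u d}}"
      using assms by (auto simp: insert_commute)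
    then show "separated ?E {u, padd u d} r x = separated ?E {u, padd u d} r y"
      unfolding separated_def using reach_snoc_edge by blast
  qed
  then have "shift ?E r d U x = shift ?E r d U y" unfolding shift_def by simp
  then show ?thesis by (simp add: fin_old_def pdiff_def padd_def psmul_def)
qed

lemma fin_old_padd_dir: "\<exists>m. pdiff (F (padd u d)) (F u) = psmul m d"
  by (rule exI[of _ "1 + shift (snd S) r d U (padd u d) - shift (snd S) r d U u"])
     (simp add: fin_old_def pdiff_def padd_def psmul_def algebra_simps)

lemma fin_new_dir: "\<exists>m. pdiff (N u) (F u) = psmul m d"
proof (cases "back_op (snd S) r d u")
  case True
  obtain m where "pdiff (F (padd u d)) (F u) = psmul m d" using fin_old_padd_dir by blast
  with True show ?thesis
    by (intro exI[of _ "m - 1"])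
      (simp add: fin_new_def new_par_def new_dir_def Let_def pdiff_def padd_def psmul_def
        algebra_simps prod_eq_iff)
next
  case False
  then show ?thesis
    by (intro exI[of _ 1])
      (simp add: fin_new_def new_par_def new_dir_def Let_def pdiff_def padd_def psmul_def)
qed

lemma subdivided_edge_collinear:
  "P \<in> {F u, F (padd u d), N u} \<Longrightarrow> \<exists>m. pdiff P (F u) = psmul m d"
proof -
  assume "P \<in> {F u, F (padd u d), N u}"
  moreover have "pdiff (F u) (F u) = psmul 0 d" by (simp add: pdiff_def psmul_def)
  ultimately show ?thesis using fin_old_padd_dir fin_new_dir by blast
qed

lemma edge_nodes: "{a, b} \<in> snd S \<Longrightarrow> a \<in> fst S \<and> b \<in> fst S \<and> a \<noteq> b"
  using proper unfolding proper_edges_def by (metis doubleton_eq_iff)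

lemma nodes_apply_ops: "fst (apply_ops S r d U) = F ` fst S \<union> N ` U"
  by (simp add: apply_ops_def Let_def)

lemma edges_apply_ops_iff: "e' \<in> snd (apply_ops S r d U) \<longleftrightarrow>
   (\<exists>e. e' = F ` e \<and> e \<in> snd S \<and> \<not> (\<exists>u\<in>U. e = {u, padd u d})) \<or>
   (\<exists>u. e' = {F u, N u} \<and> u \<in> U) \<or>
   (\<exists>u. e' = {N u, F (padd u d)} \<and> u \<in> U \<and> {u, padd u d} \<in> snd S)"
  by (simp add: apply_ops_def Let_def)

lemma apply_ops_anchor: "r \<in> fst (apply_ops S r d U)"
  using fin_old_anchor anchor unfolding nodes_apply_ops by (metis UnI1 image_eqI)

lemma proper_edges_apply_ops: "proper_edges (apply_ops S r d U)"
  unfolding proper_edges_def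
proof
  fix e assume "e \<in> snd (apply_ops S r d U)"
  then show "\<exists>a b. e = {a, b} \<and> a \<in> fst (apply_ops S r d U) \<and>
      b \<in> fst (apply_ops S r d U) \<and> a \<noteq> b"
    unfolding edges_apply_ops_iff nodes_apply_ops
  proof (elim disjE exE conjE)
    fix e0 assume h: "e = F ` e0" "e0 \<in> snd S"
    obtain a b where "e0 = {a, b}" "a \<in> fst S" "b \<in> fst S" "a \<noteq> b"
      using proper h(2) unfolding proper_edges_def by blast
    with h show "\<exists>a b. e = {a, b} \<and> a \<in> F ` fst S \<union> N ` U \<and> b \<in> F ` fst S \<union> N ` U \<and> a \<noteq> b"
      using fin_old_inj by blast
  next
    fix u assume "e = {F u, N u}" "u \<in> U"
    then show "\<exists>a b. e = {a, b} \<and> a \<in> F ` fst S \<union> N ` U \<and> b \<in> F ` fst S \<union> N ` U \<and> a \<noteq> b"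
      using fin_old_neq_fin_new ops by blast
  next
    fix u assume h: "e = {N u, F (padd u d)}" "u \<in> U" "{u, padd u d} \<in> snd S"
    have "padd u d \<in> fst S" using edge_nodes h(3) by blast
    with h show "\<exists>a b. e = {a, b} \<and> a \<in> F ` fst S \<union> N ` U \<and> b \<in> F ` fst S \<union> N ` U \<and> a \<noteq> b"
      using fin_old_neq_fin_new by blast
  qed
qed

lemma edge_apply_ops_from_old:
  assumes x: "x \<in> fst S" and e: "{F x, z} \<in> snd (apply_ops S r d U)"
  shows "(\<exists>y. z = F y \<and> y \<in> fst S \<and> {x, y} \<in> snd S \<and> \<not> (\<exists>u\<in>U. {x, y} = {u, padd u d})) \<or>
         (\<exists>u\<in>U. z = N u \<and> (x = u \<or> (x = padd u d \<and> {u, padd u d} \<in> snd S)))"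
  using e unfolding edges_apply_ops_iff
proof (elim disjE exE conjE)
  fix e0 assume h: "{F x, z} = F ` e0" "e0 \<in> snd S" "\<not> (\<exists>u\<in>U. e0 = {u, padd u d})"
  obtain a b where ab: "e0 = {a, b}" "a \<in> fst S" "b \<in> fst S" "a \<noteq> b"
    using proper h(2) unfolding proper_edges_def by blast
  have "{F x, z} = {F a, F b}" using h(1) ab by simp
  then have "(F x = F a \<and> z = F b) \<or> (F x = F b \<and> z = F a)" by (simp only: doubleton_eq_iff)
  then show ?thesis
  proof
    assume c: "F x = F a \<and> z = F b"
    then have "x = a" using fin_old_inj x ab(2) by blast
    then have "z = F b \<and> b \<in> fst S \<and> {x, b} \<in> snd S \<and> \<not> (\<exists>u\<in>U. {x, b} = {u, padd u d})"
      using c h ab by blast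
    then show ?thesis by blast
  next
    assume c: "F x = F b \<and> z = F a"
    then have "x = b" using fin_old_inj x ab(3) by blast
    moreover have "{b, a} = e0" using ab by blast
    ultimately have "z = F a \<and> a \<in> fst S \<and> {x, a} \<in> snd S \<and> \<not> (\<exists>u\<in>U. {x, a} = {u, padd u d})"
      using c h ab by metis
    then show ?thesis by blast
  qed
next
  fix u assume h: "{F x, z} = {F u, N u}" "u \<in> U"
  have "F x \<noteq> N u" using fin_old_neq_fin_new x h(2) .
  moreover have "F u \<noteq> N u" using fin_old_neq_fin_new ops h(2) by blast
  ultimately have "F x = F u \<and> z = N u" using h(1) by (metis doubleton_eq_iff)
  moreover then have "x = u" using fin_old_inj x ops h(2) by blast
  ultimately show ?thesis using h(2) by blast
next
  fix u assume h: "{F x, z} = {N u, F (padd u d)}" "u \<in> U" "{u, padd u d} \<in> snd S"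
  have ud: "padd u d \<in> fst S" using edge_nodes h(3) by blast
  have "F x \<noteq> N u" using fin_old_neq_fin_new x h(2) .
  moreover have "F (padd u d) \<noteq> N u" using fin_old_neq_fin_new ud h(2) by blast
  ultimately have "F x = F (padd u d) \<and> z = N u" using h(1) by (metis doubleton_eq_iff)
  moreover then have "x = padd u d" using fin_old_inj x ud by blast
  ultimately show ?thesis using h by blast
qed

lemma edge_apply_ops_from_new:
  assumes u: "u \<in> U" and e: "{N u, z} \<in> snd (apply_ops S r d U)"
  shows "z = F u \<or> ({u, padd u d} \<in> snd S \<and> z = F (padd u d))"
  using e unfolding edges_apply_ops_iff
proof (elim disjE exE conjE)
  fix e0 assume h: "{N u, z} = F ` e0" "e0 \<in> snd S"
  obtain a b where ab: "e0 = {a, b}" "a \<in> fst S" "b \<in> fst S"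
    using proper h(2) unfolding proper_edges_def by blast
  have "N u \<in> {F a, F b}" using h(1) ab by (metis image_insert image_empty insertI1)
  then have "N u = F a \<or> N u = F b" by simp
  then show ?thesis using fin_old_neq_fin_new[OF ab(2) u] fin_old_neq_fin_new[OF ab(3) u] by simp
next
  fix v assume h: "{N u, z} = {F v, N v}" "v \<in> U"
  have vV: "v \<in> fst S" using h(2) ops by blast
  have "N u \<noteq> F v" using fin_old_neq_fin_new[OF vV u] by simp
  then have "N u = N v \<and> z = F v" using h(1) doubleton_eq_iff[of "N u" z "F v" "N v"] by blast
  then show ?thesis using fin_new_inj[OF u h(2)] by blast
next
  fix v assume h: "{N u, z} = {N v, F (padd v d)}" "v \<in> U" "{v, padd v d} \<in> snd S"
  have ud: "padd v d \<in> fst S" using edge_nodes h(3) by blast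
  have "N u \<noteq> F (padd v d)" using fin_old_neq_fin_new[OF ud u] by simp
  then have "N u = N v \<and> z = F (padd v d)" using h(1) doubleton_eq_iff[of "N u" z "N v" "F (padd v d)"] by blast
  then show ?thesis using fin_new_inj[OF u h(2)] h(3) by blast
qed

abbreviation ends_at_new_node :: "pt list \<Rightarrow> bool" where
  "ends_at_new_node ys \<equiv> \<exists>ys0 u xs. ys = ys0 @ [N u] \<and> ys0 \<noteq> [] \<and> u \<in> U \<and>
     simulated_by S r F ys0 xs \<and> (last xs = u \<or> (last xs = padd u d \<and> {u, padd u d} \<in> snd S))"

lemma simulated_by_snoc_apply_ops:
  assumes sim: "simulated_by S r F ys xs" and ne: "ys \<noteq> []"
    and path: "is_path (apply_ops S r d U) (ys @ [z])"
  shows "(\<exists>xs'. simulated_by S r F (ys @ [z]) xs') \<or> ends_at_new_node (ys @ [z])"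
proof -
  note path_parts = is_path_snocD[OF path ne]
  have x: "last xs \<in> fst S"
    using sim last_in_set by (auto simp: simulated_by_def is_path_def)
  have e: "{F (last xs), z} \<in> snd (apply_ops S r d U)"
    using path_parts(3) sim by (simp add: simulated_by_def)
  consider
      y where "z = F y" "y \<in> fst S" "{last xs, y} \<in> snd S" "\<not> (\<exists>u\<in>U. {last xs, y} = {u, padd u d})"
    | u where "u \<in> U" "z = N u" "last xs = u \<or> (last xs = padd u d \<and> {u, padd u d} \<in> snd S)"
    using edge_apply_ops_from_old[OF x e] by metis
  then show ?thesis
  proof cases
    case (1 y)
    then have "simulated_by S r F (ys @ [z]) (xs @ [y])"
      using simulated_by_snoc[OF sim ne path_parts(2)] fin_old_rigid_edge by blast
    then show ?thesis by blast
  next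
    case (2 u)
    then have "ends_at_new_node (ys @ [z])"
      using sim ne by (intro exI[of _ ys] exI[of _ u] exI[of _ xs]) simp
    then show ?thesis ..
  qed
qed

lemma new_node_successor:
  assumes u: "u \<in> U" and x: "x = u \<or> (x = padd u d \<and> {u, padd u d} \<in> snd S)"
    and e: "{N u, z} \<in> snd (apply_ops S r d U)" and z: "z \<noteq> F x"
  obtains w s where "z = F w" "{x, w} \<in> snd S" "pdiff w x = psmul s d" "s = 1 \<or> s = -1"
    "x \<in> {u, padd u d}" "w \<in> {u, padd u d}"
proof (cases "x = u")
  case True
  then have "z = F (padd u d)" "{u, padd u d} \<in> snd S"
    using edge_apply_ops_from_new[OF u e] z by auto
  moreover have "pdiff (padd u d) u = psmul 1 d" by (simp add: pdiff_def padd_def psmul_def)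
  ultimately show ?thesis using that[of "padd u d" 1] True by simp
next
  case False
  then have xe: "x = padd u d" "{u, padd u d} \<in> snd S" using x by auto
  then have "z = F u" using edge_apply_ops_from_new[OF u e] z by auto
  moreover have "pdiff u (padd u d) = psmul (-1) d" by (simp add: pdiff_def padd_def psmul_def)
  moreover have "{padd u d, u} \<in> snd S" using xe by (simp add: insert_commute)
  ultimately show ?thesis using that[of u "-1"] xe by simp
qed

text \<open>The three nodes \<open>F x\<close>, \<open>N u\<close>, \<open>z\<close> all lie on the line of the subdivided edge
  through \<open>F u\<close>, so \<open>N u\<close> is passed straight through.\<close>
lemma simulated_by_past_new_node:
  assumes sim: "simulated_by S r F ys xs" and ne: "ys \<noteq> []" and u: "u \<in> U"
    and x: "last xs = u \<or> (last xs = padd u d \<and> {u, padd u d} \<in> snd S)"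
    and path: "is_path (apply_ops S r d U) ((ys @ [N u]) @ [z])"
  shows "\<exists>xs'. simulated_by S r F (ys @ [N u] @ [z]) xs'"
proof -
  define x where "x = last xs"
  note path_parts = is_path_snocD[OF path, simplified]
  have "last ys = F x" using sim by (simp add: simulated_by_def x_def)
  then have "F x \<in> set ys" using last_in_set[OF ne] by simp
  then have "z \<noteq> F x" using path_parts(2) by blast
  then obtain w s where w: "z = F w" "{x, w} \<in> snd S" "pdiff w x = psmul s d" "s = 1 \<or> s = -1"
    "x \<in> {u, padd u d}" "w \<in> {u, padd u d}"
    using new_node_successor[OF u x[folded x_def]] path_parts(3) by blast
  have wV: "w \<in> fst S" and xV: "x \<in> fst S" using edge_nodes w(2) by blast+
  obtain a1 where a1: "pdiff (N u) (F u) = psmul a1 d" using subdivided_edge_collinear by blast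
  obtain a2 where a2: "pdiff (F x) (F u) = psmul a2 d" using subdivided_edge_collinear w(5) by blast
  obtain a3 where a3: "pdiff z (F u) = psmul a3 d" using subdivided_edge_collinear w(6) w(1) by blast
  have "N u \<noteq> F x" "z \<noteq> N u" using fin_old_neq_fin_new[OF xV u] fin_old_neq_fin_new[OF wV u] w(1)
    by auto
  then obtain m1 m2 where m: "m1 \<noteq> 0" "pdiff (N u) (F x) = psmul m1 d"
      "m2 \<noteq> 0" "pdiff z (N u) = psmul m2 d"
    using pdiff_collinear[OF a1 a2] pdiff_collinear[OF a3 a1] by metis
  have "simulated_by S r F (ys @ [N u] @ [z]) (xs @ [w])"
    using simulated_by_snoc_straight[OF sim ne, of z "N u" w] path_parts(2) wV w(1-4) x_def m
      parallel_psmul_unit[OF m(1) w(4)] parallel_psmul_unit[OF m(3) w(4)]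
      pdot_psmul_dirs_neq_0[OF dir m(1) m(3)]
    by simp
  then show ?thesis by blast
qed

lemma root_path_apply_ops_cases:
  "is_path (apply_ops S r d U) ys \<Longrightarrow> hd ys = r \<Longrightarrow>
    (\<exists>xs. simulated_by S r F ys xs) \<or> ends_at_new_node ys"
proof (induction ys rule: rev_induct)
  case Nil then show ?case by (simp add: is_path_def)
next
  case (snoc z ys)
  show ?case
  proof (cases "ys = []")
    case True
    have "simulated_by S r F [r] [r]"
      using anchor fin_old_anchor by (simp add: simulated_by_def is_path_def)
    then show ?thesis using True snoc.prems(2) by auto
  next
    case ne: False
    have "(\<exists>xs. simulated_by S r F ys xs) \<or> ends_at_new_node ys"
      using snoc.IH is_path_snocD(1)[OF snoc.prems(1) ne] snoc.prems(2) ne by simp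
    then show ?thesis
    proof
      assume "\<exists>xs. simulated_by S r F ys xs"
      then show ?thesis using simulated_by_snoc_apply_ops ne snoc.prems(1) by blast
    next
      assume "ends_at_new_node ys"
      then obtain ys0 u xs where ys: "ys = ys0 @ [N u]" and new: "ys0 \<noteq> []" "u \<in> U"
        "simulated_by S r F ys0 xs" "last xs = u \<or> (last xs = padd u d \<and> {u, padd u d} \<in> snd S)"
        by blast
      have "\<exists>xs'. simulated_by S r F (ys0 @ [N u] @ [z]) xs'"
        using simulated_by_past_new_node[OF new(3,1,2,4)] snoc.prems(1) ys by simp
      then show ?thesis using ys by simp
    qed
  qed
qed

text \<open>Only a new node at the very end of a path can cost an extra turning point.\<close>
lemma card_turning_points_apply_ops:
  assumes "is_path (apply_ops S r d U) ys" "hd ys = r"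
  obtains xs where "is_path S xs" "hd xs = r"
    "card (turning_points ys) \<le> card (turning_points xs) + 1"
  using root_path_apply_ops_cases[OF assms]
proof
  assume "\<exists>xs. simulated_by S r F ys xs"
  then show thesis using that by (fastforce simp: simulated_by_def)
next
  assume "ends_at_new_node ys"
  then obtain ys0 u xs where "ys = ys0 @ [N u]" "ys0 \<noteq> []" "simulated_by S r F ys0 xs"
    by blast
  then show thesis using that card_turning_points_snoc[of ys0 "N u"]
    by (fastforce simp: simulated_by_def)
qed

end

lemma growth_step_proper_edges:
  assumes "growth_step a S S'" "proper_edges S"
  shows "proper_edges S' \<and> a \<in> fst S'"
proof -
  obtain d U where "d \<in> dirs" "a \<in> fst S" "U \<subseteq> fst S" "collision_free S a d U"
    and S': "S' = apply_ops S a d U"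
    using assms(1) unfolding growth_step_def by blast
  then interpret growth_ops S a d U using assms(2) by unfold_locales
  show ?thesis using S' proper_edges_apply_ops apply_ops_anchor by simp
qed

lemma growth_step_contract_path:
  assumes "growth_step a S S'" "proper_edges S" "is_path S' ys" "hd ys = a"
  obtains xs where "is_path S xs" "hd xs = a"
    "card (turning_points ys) \<le> card (turning_points xs) + 1"
proof -
  obtain d U where "d \<in> dirs" "a \<in> fst S" "U \<subseteq> fst S" "collision_free S a d U"
    and S': "S' = apply_ops S a d U"
    using assms(1) unfolding growth_step_def by blast
  then interpret growth_ops S a d U using assms(2) by unfold_locales
  show ?thesis using card_turning_points_apply_ops assms(3,4) S' that by blast
qed

locale growth_process =
  fixes a :: pt and Ss :: "nat \<Rightarrow> shape" and t :: nat
  assumes initial: "Ss 0 = ({a}, {})"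
    and steps: "\<And>i. i < t \<Longrightarrow> growth_step a (Ss i) (Ss (Suc i))"
begin

lemma proper_edges_anchor: "i \<le> t \<Longrightarrow> proper_edges (Ss i) \<and> a \<in> fst (Ss i)"
proof (induction i)
  case 0
  then show ?case using initial by (simp add: proper_edges_def)
next
  case (Suc i)
  then have "i < t" by simp
  then show ?case using growth_step_proper_edges[OF steps] Suc by simp
qed

lemma card_turning_points_root_path:
  "i \<le> t \<Longrightarrow> is_path (Ss i) ys \<Longrightarrow> hd ys = a \<Longrightarrow> card (turning_points ys) \<le> i + 1"
proof (induction i arbitrary: ys)
  case 0
  then have "set ys \<subseteq> {a}" "distinct ys" using initial by (auto simp: is_path_def)
  then have "length ys \<le> 1" using distinct_card[of ys] card_mono[of "{a}" "set ys"] by simp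
  then show ?case using card_turning_points_le_length[of ys] by simp
next
  case (Suc i)
  obtain xs where "is_path (Ss i) xs" "hd xs = a"
      "card (turning_points ys) \<le> card (turning_points xs) + 1"
    using growth_step_contract_path[OF steps] proper_edges_anchor Suc.prems by (metis Suc_le_eq less_imp_le)
  then show ?case using Suc.IH Suc.prems(1) by fastforce
qed

end

lemma pdiff_padd [simp]: "pdiff (padd p v) v = p"
  by (simp add: pdiff_def padd_def)

lemma turning_points_map_pdiff: "turning_points (map (\<lambda>p. pdiff p v) xs) = turning_points xs"
proof (rule set_eqI)
  fix i
  show "i \<in> turning_points (map (\<lambda>p. pdiff p v) xs) \<longleftrightarrow> i \<in> turning_points xs"
  proof (cases "0 < i \<and> Suc i < length xs")
    case True
    then have "i - 1 < length xs" "i < length xs" by auto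
    then show ?thesis using True unfolding turning_points_def Let_def by (simp add: pdiff_def)
  next
    case False then show ?thesis unfolding turning_points_def by auto
  qed
qed

lemma is_path_translateD:
  assumes "is_path (translate v S) xs"
  shows "is_path S (map (\<lambda>p. pdiff p v) xs)"
proof -
  have nodes: "set xs \<subseteq> (\<lambda>x. padd x v) ` fst S"
    using assms by (simp add: is_path_def translate_def)
  have "inj (\<lambda>p. pdiff p v)" by (rule injI) (auto simp: pdiff_def prod_eq_iff)
  then have "distinct (map (\<lambda>p. pdiff p v) xs)"
    using assms inj_on_subset[OF _ subset_UNIV] by (simp add: is_path_def distinct_map)
  moreover have "{map (\<lambda>p. pdiff p v) xs ! i, map (\<lambda>p. pdiff p v) xs ! Suc i} \<in> snd S"
    if i: "Suc i < length xs" for i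
  proof -
    obtain e where e: "e \<in> snd S" "{xs ! i, xs ! Suc i} = (\<lambda>x. padd x v) ` e"
      using assms i by (auto simp: is_path_def translate_def)
    then have "(\<lambda>p. pdiff p v) ` {xs ! i, xs ! Suc i} = e" by (simp add: image_image)
    then show ?thesis using e(1) i by simp
  qed
  ultimately show ?thesis using assms nodes by (auto simp: is_path_def)
qed

theorem theorem3p4:
  fixes T :: shape and k tf :: nat
  assumes "is_tree_shape T"
    and "0 < k"
    and "\<forall>u0\<in>fst T. \<exists>xs. root_leaf_path T u0 xs \<and> k \<le> card (turning_points xs)"
    and "grows_in T tf"
  shows "k - 1 \<le> tf"
proof -
  obtain a Ss v where process: "growth_process a Ss tf" and T: "T = translate v (Ss tf)"
    using assms(4) unfolding grows_in_def growth_process_def by blast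
  interpret growth_process a Ss tf by (rule process)
  have "padd a v \<in> fst T" using proper_edges_anchor[of tf] T by (simp add: translate_def)
  then obtain xs where xs: "root_leaf_path T (padd a v) xs" "k \<le> card (turning_points xs)"
    using assms(3) by blast
  let ?ys = "map (\<lambda>p. pdiff p v) xs"
  have "is_path (Ss tf) ?ys"
    using is_path_translateD xs(1) T by (simp add: root_leaf_path_def)
  moreover have "hd ?ys = a"
    using xs(1) by (simp add: root_leaf_path_def is_path_def hd_map)
  ultimately have "card (turning_points ?ys) \<le> tf + 1"
    using card_turning_points_root_path by blast
  then show ?thesis using xs(2) turning_points_map_pdiff[of v xs] by simp
qed

end
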